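(* Let $f:(\mathcal A,\equiv_A)\to(\mathcal C,\equiv_C)$ and $g:(\mathcal B,\equiv_B)\to(\mathcal C,\equiv_C)$ be total maps of equivalence families, with underlying sets $A=\bigcup\mathcal A$, $B=\bigcup\mathcal B$. Let $D=\{(a,b)\in A\times B\mid f(a)\equiv_C g(b)\}$ with projections $\pi_1,\pi_2$, let $d\equiv_D d'$ iff $\pi_1(d)\equiv_A\pi_1(d')$ and $\pi_2(d)\equiv_B\pi_2(d')$, and let $\mathcal D$ consist of those $x\subseteq D$ with $\pi_1x\in\mathcal A$, $\pi_2x\in\mathcal B$ and such that for every $d\in x$ there are $d_1,\dots,d_n\in x$ with $d_n=d$ and $\pi_1\{d_1,\dots,d_i\}\in\mathcal A$ and $\pi_2\{d_1,\dots,d_i\}\in\mathcal B$ for all $i\le n$. Then $(\mathcal D,\equiv_D)$ with $\pi_1,\pi_2$ is a pseudo pullback of $f$ and $g$ in the category of equivalence families; if $\equiv_C$ is the identity it is moreover a pullback.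
   Context: A family of configurations is a family $\mathcal F$ of sets such that (i) if $X\subseteq\mathcal F$ is finitely compatible in $\mathcal F$ (every finite subfamily has an upper bound in $\mathcal F$) then $\bigcup X\in\mathcal F$; and (ii) if $e\in x\in\mathcal F$ there are $e_1,\dots,e_n=e$ in $x$ with $\{e_1,\dots,e_i\}\in\mathcal F$ for all $i\le n$. An equivalence family (ef) $(\mathcal A,\equiv_A)$ is a family of configurations $\mathcal A$ with an equivalence relation $\equiv_A$ on $\bigcup\mathcal A$. A map of ef's $f:(\mathcal A,\equiv_A)\to(\mathcal B,\equiv_B)$ is a partial function $f:\bigcup\mathcal A\rightharpoonup\bigcup\mathcal B$ preserving $\equiv$ (if $a_1\equiv_A a_2$ then $f(a_1),f(a_2)$ are both undefined or both defined and equivalent) such that for every $x\in\mathcal A$, $fx\in\mathcal B$ and for $a_1,a_2\in x$, $f(a_1)\equiv_B f(a_2)$ implies $a_1\equiv_A a_2$. Maps compose as partial functions. Two maps are equivalent, $f_1\equiv f_2$, iff they are defined on the same elements and $f_1(a)\equiv f_2(a)$ wherever defined. A pseudo pullback of $f,g$ is an ef $\mathcal D$ with maps $p:\mathcal D\to\mathcal A$, $q:\mathcal D\to\mathcal B$ such that $f\circ p\equiv g\circ q$ and for every $\mathcal D'$ with maps $p',q'$ satisfying $f\circ p'\equiv g\circ q'$ there is a unique map $h:\mathcal D'\to\mathcal D$ with $p'=p\circ h$ and $q'=q\circ h$. *)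

theory Defs
  imports Main
begin

definition fin_compat :: "'a set set \<Rightarrow> 'a set set \<Rightarrow> bool" where
  "fin_compat F X \<longleftrightarrow> (\<forall>Y. Y \<subseteq> X \<longrightarrow> finite Y \<longrightarrow> (\<exists>z\<in>F. \<forall>y\<in>Y. y \<subseteq> z))"

definition family_of_configs :: "'a set set \<Rightarrow> bool" where
  "family_of_configs F \<longleftrightarrow>
     (\<forall>X. X \<subseteq> F \<longrightarrow> fin_compat F X \<longrightarrow> \<Union>X \<in> F) \<and>
     (\<forall>x\<in>F. \<forall>e\<in>x. \<exists>es. es \<noteq> [] \<and> last es = e \<and> set es \<subseteq> x \<and>
                          (\<forall>i\<in>{1..length es}. set (take i es) \<in> F))"

type_synonym 'a ef = "'a set set \<times> ('a \<times> 'a) set"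

definition is_ef :: "'a ef \<Rightarrow> bool" where
  "is_ef E \<longleftrightarrow> family_of_configs (fst E) \<and> equiv (\<Union>(fst E)) (snd E)"

definition pimage :: "('a \<Rightarrow> 'b option) \<Rightarrow> 'a set \<Rightarrow> 'b set" where
  "pimage f x = {b. \<exists>a\<in>x. f a = Some b}"

definition is_ef_map :: "'a ef \<Rightarrow> 'b ef \<Rightarrow> ('a \<Rightarrow> 'b option) \<Rightarrow> bool" where
  "is_ef_map A B f \<longleftrightarrow>
     dom f \<subseteq> \<Union>(fst A) \<and>
     (\<forall>a1 a2. (a1, a2) \<in> snd A \<longrightarrow>
        (f a1 = None \<and> f a2 = None) \<or>
        (\<exists>b1 b2. f a1 = Some b1 \<and> f a2 = Some b2 \<and> (b1, b2) \<in> snd B)) \<and>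
     (\<forall>x\<in>fst A. pimage f x \<in> fst B \<and>
        (\<forall>a1\<in>x. \<forall>a2\<in>x. \<forall>b1 b2. f a1 = Some b1 \<longrightarrow> f a2 = Some b2 \<longrightarrow>
            (b1, b2) \<in> snd B \<longrightarrow> (a1, a2) \<in> snd A))"

definition total_map :: "'a ef \<Rightarrow> ('a \<Rightarrow> 'b option) \<Rightarrow> bool" where
  "total_map A f \<longleftrightarrow> dom f = \<Union>(fst A)"

definition map_equiv :: "('b \<times> 'b) set \<Rightarrow> ('a \<Rightarrow> 'b option) \<Rightarrow> ('a \<Rightarrow> 'b option) \<Rightarrow> bool" where
  "map_equiv R f1 f2 \<longleftrightarrow> dom f1 = dom f2 \<and>
     (\<forall>a b1 b2. f1 a = Some b1 \<longrightarrow> f2 a = Some b2 \<longrightarrow> (b1, b2) \<in> R)"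

section \<open>Pseudo pullbacks and pullbacks (universal property w.r.t. test objects of type 'd)\<close>

definition is_pseudo_pullback ::
  "'d itself \<Rightarrow> 'a ef \<Rightarrow> 'b ef \<Rightarrow> 'c ef \<Rightarrow> ('a \<Rightarrow> 'c option) \<Rightarrow> ('b \<Rightarrow> 'c option)
   \<Rightarrow> 'e ef \<Rightarrow> ('e \<Rightarrow> 'a option) \<Rightarrow> ('e \<Rightarrow> 'b option) \<Rightarrow> bool" where
  "is_pseudo_pullback (_::'d itself) A B C f g D p q \<longleftrightarrow>
     is_ef D \<and> is_ef_map D A p \<and> is_ef_map D B q \<and>
     map_equiv (snd C) (f \<circ>\<^sub>m p) (g \<circ>\<^sub>m q) \<and>
     (\<forall>(D'::'d ef) p' q'. is_ef D' \<and> is_ef_map D' A p' \<and> is_ef_map D' B q' \<and>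
        map_equiv (snd C) (f \<circ>\<^sub>m p') (g \<circ>\<^sub>m q') \<longrightarrow>
        (\<exists>!h. is_ef_map D' D h \<and> p' = p \<circ>\<^sub>m h \<and> q' = q \<circ>\<^sub>m h))"

definition is_pullback ::
  "'d itself \<Rightarrow> 'a ef \<Rightarrow> 'b ef \<Rightarrow> 'c ef \<Rightarrow> ('a \<Rightarrow> 'c option) \<Rightarrow> ('b \<Rightarrow> 'c option)
   \<Rightarrow> 'e ef \<Rightarrow> ('e \<Rightarrow> 'a option) \<Rightarrow> ('e \<Rightarrow> 'b option) \<Rightarrow> bool" where
  "is_pullback (_::'d itself) A B C f g D p q \<longleftrightarrow>
     is_ef D \<and> is_ef_map D A p \<and> is_ef_map D B q \<and>
     f \<circ>\<^sub>m p = g \<circ>\<^sub>m q \<and>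
     (\<forall>(D'::'d ef) p' q'. is_ef D' \<and> is_ef_map D' A p' \<and> is_ef_map D' B q' \<and>
        f \<circ>\<^sub>m p' = g \<circ>\<^sub>m q' \<longrightarrow>
        (\<exists>!h. is_ef_map D' D h \<and> p' = p \<circ>\<^sub>m h \<and> q' = q \<circ>\<^sub>m h))"

definition pb_set :: "'a ef \<Rightarrow> 'b ef \<Rightarrow> 'c ef \<Rightarrow> ('a \<Rightarrow> 'c option) \<Rightarrow> ('b \<Rightarrow> 'c option) \<Rightarrow> ('a \<times> 'b) set" where
  "pb_set A B C f g = {(a, b). a \<in> \<Union>(fst A) \<and> b \<in> \<Union>(fst B) \<and>
      (\<exists>c1 c2. f a = Some c1 \<and> g b = Some c2 \<and> (c1, c2) \<in> snd C)}"

definition pb_configs :: "'a ef \<Rightarrow> 'b ef \<Rightarrow> 'c ef \<Rightarrow> ('a \<Rightarrow> 'c option) \<Rightarrow> ('b \<Rightarrow> 'c option) \<Rightarrow> ('a \<times> 'b) set set" where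
  "pb_configs A B C f g = {x. x \<subseteq> pb_set A B C f g \<and> fst ` x \<in> fst A \<and> snd ` x \<in> fst B \<and>
      (\<forall>d\<in>x. \<exists>ds. ds \<noteq> [] \<and> last ds = d \<and> set ds \<subseteq> x \<and>
          (\<forall>i\<in>{1..length ds}. fst ` set (take i ds) \<in> fst A \<and> snd ` set (take i ds) \<in> fst B))}"

definition pb_rel :: "'a ef \<Rightarrow> 'b ef \<Rightarrow> 'c ef \<Rightarrow> ('a \<Rightarrow> 'c option) \<Rightarrow> ('b \<Rightarrow> 'c option) \<Rightarrow> (('a \<times> 'b) \<times> ('a \<times> 'b)) set" where
  "pb_rel A B C f g = {(d, d'). d \<in> \<Union>(pb_configs A B C f g) \<and> d' \<in> \<Union>(pb_configs A B C f g) \<and>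
      (fst d, fst d') \<in> snd A \<and> (snd d, snd d') \<in> snd B}"

definition pb_ef :: "'a ef \<Rightarrow> 'b ef \<Rightarrow> 'c ef \<Rightarrow> ('a \<Rightarrow> 'c option) \<Rightarrow> ('b \<Rightarrow> 'c option) \<Rightarrow> ('a \<times> 'b) ef" where
  "pb_ef A B C f g = (pb_configs A B C f g, pb_rel A B C f g)"

definition pb_p1 :: "'a ef \<Rightarrow> 'b ef \<Rightarrow> 'c ef \<Rightarrow> ('a \<Rightarrow> 'c option) \<Rightarrow> ('b \<Rightarrow> 'c option) \<Rightarrow> ('a \<times> 'b) \<Rightarrow> 'a option" where
  "pb_p1 A B C f g d = (if d \<in> \<Union>(pb_configs A B C f g) then Some (fst d) else None)"

definition pb_p2 :: "'a ef \<Rightarrow> 'b ef \<Rightarrow> 'c ef \<Rightarrow> ('a \<Rightarrow> 'c option) \<Rightarrow> ('b \<Rightarrow> 'c option) \<Rightarrow> ('a \<times> 'b) \<Rightarrow> 'b option" where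
  "pb_p2 A B C f g d = (if d \<in> \<Union>(pb_configs A B C f g) then Some (snd d) else None)"

end

theory Submission
  imports Defs
begin

text \<open>
  A cone \<open>(p', q')\<close> over the cospan can only factor through the projections via the pairing
  \<open>e \<mapsto> (p' e, q' e)\<close>, so uniqueness is automatic. For existence, totality of \<open>f\<close> and \<open>g\<close>
  together with \<open>f \<circ> p' \<equiv> g \<circ> q'\<close> makes \<open>p'\<close> and \<open>q'\<close> defined at the same events, and the
  pairing sends configurations to configurations: a securing chain of an event is mapped to a
  securing chain of its image by dropping the undefined points. On a configuration of \<open>D\<close> the
  two projections reflect equivalence, because there equivalence of first components and of second
  components both mean that the common images in \<open>C\<close> are equivalent. When \<open>\<equiv>\<^sub>C\<close> is the
  identity, equivalence of maps into \<open>C\<close> is equality, which turns the pseudo pullback into a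
  pullback.
\<close>

lemma set_map_filter: "set (List.map_filter h xs) = pimage h (set xs)"
  by (induction xs) (auto simp: pimage_def split: option.splits)

lemma take_map_filter:
  "\<exists>j\<le>length xs. take i (List.map_filter h xs) = List.map_filter h (take j xs)"
proof (induction xs arbitrary: i)
  case Nil
  then show ?case by simp
next
  case (Cons x xs)
  show ?case
  proof (cases "h x")
    case None
    with Cons obtain j where "j \<le> length xs" "take i (List.map_filter h xs) = List.map_filter h (take j xs)"
      by blast
    with None show ?thesis by (intro exI[of _ "Suc j"]) auto
  next
    case (Some y)
    show ?thesis
    proof (cases i)
      case 0
      then show ?thesis by (intro exI[of _ 0]) auto
    next
      case (Suc i')
      with Cons obtain j where "j \<le> length xs" "take i' (List.map_filter h xs) = List.map_filter h (take j xs)"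
        by blast
      with Some Suc show ?thesis by (intro exI[of _ "Suc j"]) auto
    qed
  qed
qed

lemma map_filter_append:
  "List.map_filter h (xs @ ys) = List.map_filter h xs @ List.map_filter h ys"
  by (induction xs) (auto split: option.splits)

lemma last_map_filter:
  assumes "xs \<noteq> []" and "h (last xs) = Some y"
  shows "List.map_filter h xs \<noteq> [] \<and> last (List.map_filter h xs) = y"
  using assms by (induction xs rule: rev_induct) (auto simp: map_filter_append)

definition prefixes_satisfy :: "('a set \<Rightarrow> bool) \<Rightarrow> 'a list \<Rightarrow> bool" where
  "prefixes_satisfy P xs \<longleftrightarrow> (\<forall>i\<in>{1..length xs}. P (set (take i xs)))"

lemma prefixes_satisfy_take: "prefixes_satisfy P xs \<Longrightarrow> prefixes_satisfy P (take n xs)"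
  unfolding prefixes_satisfy_def by (auto simp: min_def)

lemma prefixes_satisfy_map_filter:
  assumes xs: "prefixes_satisfy P xs" and PQ: "\<And>y. P y \<Longrightarrow> Q (pimage h y)"
  shows "prefixes_satisfy Q (List.map_filter h xs)"
  unfolding prefixes_satisfy_def
proof
  fix i assume i: "i \<in> {1..length (List.map_filter h xs)}"
  obtain j where j: "j \<le> length xs" "take i (List.map_filter h xs) = List.map_filter h (take j xs)"
    using take_map_filter by blast
  have "take i (List.map_filter h xs) \<noteq> []"
    using i by auto
  with j have "j \<noteq> 0"
    by (metis map_filter_simps(1) take0)
  with j xs have "P (set (take j xs))"
    unfolding prefixes_satisfy_def by auto
  then show "Q (set (take i (List.map_filter h xs)))"
    using j(2) PQ by (simp add: set_map_filter)
qed

lemma family_of_configs_Union: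
  "family_of_configs F \<Longrightarrow> X \<subseteq> F \<Longrightarrow> fin_compat F X \<Longrightarrow> \<Union>X \<in> F"
  unfolding family_of_configs_def by blast

lemma family_of_configs_chain:
  assumes "family_of_configs F" and "x \<in> F" and "e \<in> x"
  obtains es where "es \<noteq> []" "last es = e" "set es \<subseteq> x" "prefixes_satisfy (\<lambda>s. s \<in> F) es"
  using assms(1)[unfolded family_of_configs_def, THEN conjunct2] assms(2,3) that
  unfolding prefixes_satisfy_def by blast

lemma fin_compat_image:
  assumes "fin_compat F X" and "\<And>z. z \<in> F \<Longrightarrow> h ` z \<in> G"
  shows "fin_compat G ((`) h ` X)"
  unfolding fin_compat_def
proof (intro allI impI)
  fix Y assume "Y \<subseteq> (`) h ` X" "finite Y"
  then obtain Y0 where Y0: "Y0 \<subseteq> X" "finite Y0" "Y = (`) h ` Y0"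
    by (meson finite_subset_image)
  obtain z where z: "z \<in> F" "\<forall>y\<in>Y0. y \<subseteq> z"
    using assms(1)[unfolded fin_compat_def, rule_format, OF Y0(1,2)] by blast
  show "\<exists>z\<in>G. \<forall>y\<in>Y. y \<subseteq> z"
  proof
    show "h ` z \<in> G"
      using z(1) by (rule assms(2))
    show "\<forall>y\<in>Y. y \<subseteq> h ` z"
      using Y0(3) z(2) by blast
  qed
qed

lemma ef_map_Some_in_carrier:
  assumes "is_ef_map A B f" and "f a = Some b"
  shows "b \<in> \<Union>(fst B)"
proof -
  from assms obtain x where "x \<in> fst A" "a \<in> x"
    unfolding is_ef_map_def by blast
  with assms have "b \<in> pimage f x" "pimage f x \<in> fst B"
    unfolding is_ef_map_def pimage_def by auto
  then show ?thesis by blast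
qed

lemma ef_map_None_iff:
  assumes "is_ef_map A B f" and "(a1, a2) \<in> snd A"
  shows "f a1 = None \<longleftrightarrow> f a2 = None"
  using assms unfolding is_ef_map_def by fastforce

lemma ef_map_preserves_equiv:
  assumes "is_ef_map A B f" "(a1, a2) \<in> snd A" "f a1 = Some b1" "f a2 = Some b2"
  shows "(b1, b2) \<in> snd B"
  using assms unfolding is_ef_map_def by fastforce

lemma ef_map_reflects_equiv:
  assumes "is_ef_map A B f" "x \<in> fst A" "a1 \<in> x" "a2 \<in> x" "f a1 = Some b1" "f a2 = Some b2"
    and "(b1, b2) \<in> snd B"
  shows "(a1, a2) \<in> snd A"
  using assms unfolding is_ef_map_def by blast

lemma dom_map_comp_total:
  assumes "is_ef_map A B p" and "total_map B f"
  shows "dom (f \<circ>\<^sub>m p) = dom p"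
proof
  show "dom (f \<circ>\<^sub>m p) \<subseteq> dom p"
    by (auto simp: map_comp_def split: option.splits)
  show "dom p \<subseteq> dom (f \<circ>\<^sub>m p)"
  proof
    fix e assume "e \<in> dom p"
    then obtain b where b: "p e = Some b"
      by blast
    have "b \<in> dom f"
      using ef_map_Some_in_carrier[OF assms(1) b] assms(2) unfolding total_map_def by simp
    with b show "e \<in> dom (f \<circ>\<^sub>m p)"
      by (auto simp: map_comp_def)
  qed
qed

lemma ran_map_comp_ef_map:
  assumes "is_ef_map A B f"
  shows "ran (f \<circ>\<^sub>m p) \<subseteq> \<Union>(fst B)"
proof
  fix b assume "b \<in> ran (f \<circ>\<^sub>m p)"
  then obtain e where "(f \<circ>\<^sub>m p) e = Some b"
    by (auto simp: ran_def)
  then obtain a where "f a = Some b"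
    by (auto simp: map_comp_def split: option.splits)
  with assms show "b \<in> \<Union>(fst B)"
    by (rule ef_map_Some_in_carrier)
qed

lemma dom_eq_None_iff: "dom p = dom q \<Longrightarrow> p e = None \<longleftrightarrow> q e = None"
  by (metis domIff)

lemma map_equiv_Id_on_iff:
  assumes "ran u \<subseteq> S"
  shows "map_equiv (Id_on S) u v \<longleftrightarrow> u = v"
proof
  assume uv: "map_equiv (Id_on S) u v"
  show "u = v"
  proof
    fix e
    have "dom u = dom v"
      using uv unfolding map_equiv_def by blast
    then show "u e = v e"
      using uv unfolding map_equiv_def
      by (cases "u e"; cases "v e") (auto dest: dom_eq_None_iff[of _ _ e])
  qed
next
  assume "u = v"
  with assms show "map_equiv (Id_on S) u v"
    unfolding map_equiv_def by (auto intro: ranI)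
qed

definition pair_map :: "('e \<Rightarrow> 'a option) \<Rightarrow> ('e \<Rightarrow> 'b option) \<Rightarrow> 'e \<Rightarrow> ('a \<times> 'b) option" where
  "pair_map p q e = (case (p e, q e) of (Some a, Some b) \<Rightarrow> Some (a, b) | _ \<Rightarrow> None)"

lemma pair_map_eq_Some_iff: "pair_map p q e = Some d \<longleftrightarrow> p e = Some (fst d) \<and> q e = Some (snd d)"
  by (cases d) (simp add: pair_map_def split: option.split)

lemma pair_map_eq_None_iff:
  assumes "dom p = dom q"
  shows "pair_map p q e = None \<longleftrightarrow> p e = None"
  using dom_eq_None_iff[OF assms, of e] by (cases "p e"; cases "q e") (simp_all add: pair_map_def)

lemma map_option_fst_pair_map:
  assumes "dom p = dom q"
  shows "map_option fst \<circ> pair_map p q = p"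
proof
  fix e
  show "(map_option fst \<circ> pair_map p q) e = p e"
    using dom_eq_None_iff[OF assms, of e] by (cases "p e"; cases "q e") (simp_all add: pair_map_def)
qed

lemma map_option_snd_pair_map:
  assumes "dom p = dom q"
  shows "map_option snd \<circ> pair_map p q = q"
proof
  fix e
  show "(map_option snd \<circ> pair_map p q) e = q e"
    using dom_eq_None_iff[OF assms, of e] by (cases "p e"; cases "q e") (simp_all add: pair_map_def)
qed

lemma pair_map_map_option_fst_snd: "pair_map (map_option fst \<circ> h) (map_option snd \<circ> h) = h"
proof
  fix e
  show "pair_map (map_option fst \<circ> h) (map_option snd \<circ> h) e = h e"
    by (cases "h e") (simp_all add: pair_map_def)
qed

lemma pimage_comp_map_option: "pimage (map_option k \<circ> h) y = k ` pimage h y"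
  by (auto simp: pimage_def)

lemma fst_pimage_pair_map: "dom p = dom q \<Longrightarrow> fst ` pimage (pair_map p q) y = pimage p y"
  by (metis map_option_fst_pair_map pimage_comp_map_option)

lemma snd_pimage_pair_map: "dom p = dom q \<Longrightarrow> snd ` pimage (pair_map p q) y = pimage q y"
  by (metis map_option_snd_pair_map pimage_comp_map_option)

definition projects_into :: "'a ef \<Rightarrow> 'b ef \<Rightarrow> ('a \<times> 'b) set \<Rightarrow> bool" where
  "projects_into A B s \<longleftrightarrow> fst ` s \<in> fst A \<and> snd ` s \<in> fst B"

lemma projects_into_pimage_pair_map:
  assumes "is_ef_map D' A p" and "is_ef_map D' B q" and "dom p = dom q" and "y \<in> fst D'"
  shows "projects_into A B (pimage (pair_map p q) y)"
  using assms unfolding projects_into_def is_ef_map_def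
  by (simp add: fst_pimage_pair_map snd_pimage_pair_map)

lemma mem_pb_configs_iff:
  "x \<in> pb_configs A B C f g \<longleftrightarrow> x \<subseteq> pb_set A B C f g \<and> projects_into A B x \<and>
     (\<forall>d\<in>x. \<exists>ds. ds \<noteq> [] \<and> last ds = d \<and> set ds \<subseteq> x \<and> prefixes_satisfy (projects_into A B) ds)"
  by (simp add: pb_configs_def projects_into_def prefixes_satisfy_def)

lemma pb_configsD:
  "x \<in> pb_configs A B C f g \<Longrightarrow> x \<subseteq> pb_set A B C f g \<and> projects_into A B x"
  by (simp add: mem_pb_configs_iff)

lemma pb_configs_chainE:
  assumes "x \<in> pb_configs A B C f g" and "d \<in> x"
  obtains ds where "ds \<noteq> []" "last ds = d" "set ds \<subseteq> x" "prefixes_satisfy (projects_into A B) ds"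
  using assms unfolding mem_pb_configs_iff by blast

lemma pb_carrierD:
  assumes "d \<in> \<Union>(pb_configs A B C f g)"
  shows "fst d \<in> \<Union>(fst A)" "snd d \<in> \<Union>(fst B)"
    and "\<exists>c1 c2. f (fst d) = Some c1 \<and> g (snd d) = Some c2 \<and> (c1, c2) \<in> snd C"
proof -
  from assms have "d \<in> pb_set A B C f g"
    unfolding pb_configs_def by blast
  then show "fst d \<in> \<Union>(fst A)" "snd d \<in> \<Union>(fst B)"
    and "\<exists>c1 c2. f (fst d) = Some c1 \<and> g (snd d) = Some c2 \<and> (c1, c2) \<in> snd C"
    unfolding pb_set_def by auto
qed

lemma set_take_in_pb_configs:
  assumes "set ds \<subseteq> pb_set A B C f g" and "prefixes_satisfy (projects_into A B) ds"
    and "i \<in> {1..length ds}"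
  shows "set (take i ds) \<in> pb_configs A B C f g"
  unfolding mem_pb_configs_iff
proof (intro conjI ballI)
  show "set (take i ds) \<subseteq> pb_set A B C f g"
    using assms(1) set_take_subset by fast
  show "projects_into A B (set (take i ds))"
    using assms(2,3) unfolding prefixes_satisfy_def by blast
  fix d assume "d \<in> set (take i ds)"
  then obtain j where j: "j < i" "j < length ds" "d = ds ! j"
    by (auto simp: in_set_conv_nth)
  show "\<exists>ds'. ds' \<noteq> [] \<and> last ds' = d \<and> set ds' \<subseteq> set (take i ds) \<and>
      prefixes_satisfy (projects_into A B) ds'"
  proof (intro exI conjI)
    show "take (Suc j) ds \<noteq> []" "last (take (Suc j) ds) = d"
      using j by (auto simp: take_Suc_conv_app_nth)
    show "set (take (Suc j) ds) \<subseteq> set (take i ds)"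
      using j by (simp add: set_take_subset_set_take)
    show "prefixes_satisfy (projects_into A B) (take (Suc j) ds)"
      using assms(2) by (rule prefixes_satisfy_take)
  qed
qed

lemma pb_configs_family:
  assumes A: "family_of_configs (fst A)" and B: "family_of_configs (fst B)"
  shows "family_of_configs (pb_configs A B C f g)"
  unfolding family_of_configs_def
proof (intro conjI allI impI ballI)
  fix X assume X: "X \<subseteq> pb_configs A B C f g" and fc: "fin_compat (pb_configs A B C f g) X"
  have proj: "projects_into A B x" and sub: "x \<subseteq> pb_set A B C f g" if "x \<in> X" for x
    using pb_configsD that X by blast+
  have "\<Union>((`) fst ` X) \<in> fst A"
    using A
  proof (rule family_of_configs_Union)
    show "(`) fst ` X \<subseteq> fst A"
      using proj unfolding projects_into_def by blast
    show "fin_compat (fst A) ((`) fst ` X)"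
      using fc by (rule fin_compat_image) (simp add: pb_configsD[THEN conjunct2, unfolded projects_into_def])
  qed
  moreover have "\<Union>((`) snd ` X) \<in> fst B"
    using B
  proof (rule family_of_configs_Union)
    show "(`) snd ` X \<subseteq> fst B"
      using proj unfolding projects_into_def by blast
    show "fin_compat (fst B) ((`) snd ` X)"
      using fc by (rule fin_compat_image) (simp add: pb_configsD[THEN conjunct2, unfolded projects_into_def])
  qed
  ultimately have "projects_into A B (\<Union>X)"
    by (simp add: projects_into_def image_Union)
  moreover have "\<Union>X \<subseteq> pb_set A B C f g"
    using sub by blast
  moreover have "\<exists>ds. ds \<noteq> [] \<and> last ds = d \<and> set ds \<subseteq> \<Union>X \<and> prefixes_satisfy (projects_into A B) ds"
    if "d \<in> \<Union>X" for d
  proof -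
    from that obtain x where x: "x \<in> X" "d \<in> x"
      by blast
    with X obtain ds where "ds \<noteq> []" "last ds = d" "set ds \<subseteq> x" "prefixes_satisfy (projects_into A B) ds"
      by (meson pb_configs_chainE subsetD)
    with x show ?thesis
      by blast
  qed
  ultimately show "\<Union>X \<in> pb_configs A B C f g"
    unfolding mem_pb_configs_iff by blast
next
  fix x e assume x: "x \<in> pb_configs A B C f g" and "e \<in> x"
  then obtain ds where ds: "ds \<noteq> []" "last ds = e" "set ds \<subseteq> x" "prefixes_satisfy (projects_into A B) ds"
    by (rule pb_configs_chainE)
  have "set ds \<subseteq> pb_set A B C f g"
    using ds(3) pb_configsD[OF x] by blast
  with ds show "\<exists>es. es \<noteq> [] \<and> last es = e \<and> set es \<subseteq> x \<and>
      (\<forall>i\<in>{1..length es}. set (take i es) \<in> pb_configs A B C f g)"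
    using set_take_in_pb_configs by blast
qed

lemma pb_rel_equiv:
  assumes A: "equiv (\<Union>(fst A)) (snd A)" and B: "equiv (\<Union>(fst B)) (snd B)"
  shows "equiv (\<Union>(pb_configs A B C f g)) (pb_rel A B C f g)"
proof (rule equivI)
  show "pb_rel A B C f g \<subseteq> \<Union>(pb_configs A B C f g) \<times> \<Union>(pb_configs A B C f g)"
    unfolding pb_rel_def by auto
  show "refl_on (\<Union>(pb_configs A B C f g)) (pb_rel A B C f g)"
    using equiv_class_self[OF A] equiv_class_self[OF B] pb_carrierD(1,2)
    unfolding refl_on_def pb_rel_def by blast
  show "sym (pb_rel A B C f g)"
    using A B unfolding pb_rel_def by (auto intro!: symI elim!: equivE dest: symD)
  show "trans (pb_rel A B C f g)"
    using A B unfolding pb_rel_def by (auto intro!: transI elim!: equivE dest: transD)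
qed

lemma pb_p1_comp:
  assumes "is_ef_map D' (pb_ef A B C f g) h"
  shows "pb_p1 A B C f g \<circ>\<^sub>m h = map_option fst \<circ> h"
proof
  fix e
  show "(pb_p1 A B C f g \<circ>\<^sub>m h) e = (map_option fst \<circ> h) e"
    using ef_map_Some_in_carrier[OF assms]
    by (cases "h e") (auto simp: pb_p1_def pb_ef_def)
qed

lemma pb_p2_comp:
  assumes "is_ef_map D' (pb_ef A B C f g) h"
  shows "pb_p2 A B C f g \<circ>\<^sub>m h = map_option snd \<circ> h"
proof
  fix e
  show "(pb_p2 A B C f g \<circ>\<^sub>m h) e = (map_option snd \<circ> h) e"
    using ef_map_Some_in_carrier[OF assms]
    by (cases "h e") (auto simp: pb_p2_def pb_ef_def)
qed

locale ef_cospan =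
  fixes A :: "'a ef" and B :: "'b ef" and C :: "'c ef"
    and f :: "'a \<Rightarrow> 'c option" and g :: "'b \<Rightarrow> 'c option"
  assumes ef_A: "is_ef A" and ef_B: "is_ef B" and ef_C: "is_ef C"
    and map_f: "is_ef_map A C f" and map_g: "is_ef_map B C g"
begin

abbreviation "D \<equiv> pb_ef A B C f g"
abbreviation "\<pi>\<^sub>1 \<equiv> pb_p1 A B C f g"
abbreviation "\<pi>\<^sub>2 \<equiv> pb_p2 A B C f g"

lemma is_ef_pb: "is_ef D"
  using ef_A ef_B unfolding is_ef_def
  by (simp add: pb_ef_def pb_configs_family pb_rel_equiv)

lemma pb_fst_equiv_iff_snd_equiv:
  assumes x: "x \<in> pb_configs A B C f g" and d: "d1 \<in> x" "d2 \<in> x"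
  shows "(fst d1, fst d2) \<in> snd A \<longleftrightarrow> (snd d1, snd d2) \<in> snd B"
proof -
  from x d have "d1 \<in> \<Union>(pb_configs A B C f g)" "d2 \<in> \<Union>(pb_configs A B C f g)"
    by blast+
  then obtain c1 c1' c2 c2' where
    c: "f (fst d1) = Some c1" "g (snd d1) = Some c1'" "(c1, c1') \<in> snd C"
       "f (fst d2) = Some c2" "g (snd d2) = Some c2'" "(c2, c2') \<in> snd C"
    using pb_carrierD(3) by metis
  have C: "equiv (\<Union>(fst C)) (snd C)"
    using ef_C unfolding is_ef_def by blast
  have "(c1, c2) \<in> snd C \<longleftrightarrow> (c1', c2') \<in> snd C"
    using c(3,6) C by (meson equivE symD transD)
  moreover have "fst ` x \<in> fst A" "snd ` x \<in> fst B"
    using x unfolding mem_pb_configs_iff projects_into_def by blast+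
  ultimately show ?thesis
    using ef_map_preserves_equiv[OF map_f _ c(1,4)] ef_map_preserves_equiv[OF map_g _ c(2,5)]
      ef_map_reflects_equiv[OF map_f _ _ _ c(1,4)] ef_map_reflects_equiv[OF map_g _ _ _ c(2,5)] d
    by blast
qed

lemma pb_p1_ef_map: "is_ef_map D A \<pi>\<^sub>1"
  unfolding is_ef_map_def pb_ef_def fst_conv snd_conv
proof (intro conjI allI impI ballI)
  show "dom \<pi>\<^sub>1 \<subseteq> \<Union>(pb_configs A B C f g)"
    by (auto simp: pb_p1_def split: if_splits)
  show "\<pi>\<^sub>1 d1 = None \<and> \<pi>\<^sub>1 d2 = None \<or> (\<exists>a1 a2. \<pi>\<^sub>1 d1 = Some a1 \<and> \<pi>\<^sub>1 d2 = Some a2 \<and> (a1, a2) \<in> snd A)"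
    if "(d1, d2) \<in> pb_rel A B C f g" for d1 d2
    using that by (auto simp: pb_rel_def pb_p1_def)
  fix x assume x: "x \<in> pb_configs A B C f g"
  then have "pimage \<pi>\<^sub>1 x = fst ` x"
    by (auto simp: pimage_def pb_p1_def)
  with x show "pimage \<pi>\<^sub>1 x \<in> fst A"
    unfolding mem_pb_configs_iff projects_into_def by simp
  fix d1 d2 a1 a2 assume d: "d1 \<in> x" "d2 \<in> x" "\<pi>\<^sub>1 d1 = Some a1" "\<pi>\<^sub>1 d2 = Some a2"
    and a: "(a1, a2) \<in> snd A"
  have U: "d1 \<in> \<Union>(pb_configs A B C f g)" "d2 \<in> \<Union>(pb_configs A B C f g)"
    using x d(1,2) by blast+
  with d(3,4) a have "(fst d1, fst d2) \<in> snd A"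
    by (simp add: pb_p1_def)
  with U pb_fst_equiv_iff_snd_equiv[OF x d(1,2)] show "(d1, d2) \<in> pb_rel A B C f g"
    by (simp add: pb_rel_def)
qed

lemma pb_p2_ef_map: "is_ef_map D B \<pi>\<^sub>2"
  unfolding is_ef_map_def pb_ef_def fst_conv snd_conv
proof (intro conjI allI impI ballI)
  show "dom \<pi>\<^sub>2 \<subseteq> \<Union>(pb_configs A B C f g)"
    by (auto simp: pb_p2_def split: if_splits)
  show "\<pi>\<^sub>2 d1 = None \<and> \<pi>\<^sub>2 d2 = None \<or> (\<exists>b1 b2. \<pi>\<^sub>2 d1 = Some b1 \<and> \<pi>\<^sub>2 d2 = Some b2 \<and> (b1, b2) \<in> snd B)"
    if "(d1, d2) \<in> pb_rel A B C f g" for d1 d2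
    using that by (auto simp: pb_rel_def pb_p2_def)
  fix x assume x: "x \<in> pb_configs A B C f g"
  then have "pimage \<pi>\<^sub>2 x = snd ` x"
    by (auto simp: pimage_def pb_p2_def)
  with x show "pimage \<pi>\<^sub>2 x \<in> fst B"
    unfolding mem_pb_configs_iff projects_into_def by simp
  fix d1 d2 b1 b2 assume d: "d1 \<in> x" "d2 \<in> x" "\<pi>\<^sub>2 d1 = Some b1" "\<pi>\<^sub>2 d2 = Some b2"
    and b: "(b1, b2) \<in> snd B"
  have U: "d1 \<in> \<Union>(pb_configs A B C f g)" "d2 \<in> \<Union>(pb_configs A B C f g)"
    using x d(1,2) by blast+
  with d(3,4) b have "(snd d1, snd d2) \<in> snd B"
    by (simp add: pb_p2_def)
  with U pb_fst_equiv_iff_snd_equiv[OF x d(1,2)] show "(d1, d2) \<in> pb_rel A B C f g"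
    by (simp add: pb_rel_def)
qed

lemma pb_square_map_equiv: "map_equiv (snd C) (f \<circ>\<^sub>m \<pi>\<^sub>1) (g \<circ>\<^sub>m \<pi>\<^sub>2)"
  unfolding map_equiv_def
proof (intro conjI allI impI)
  show "dom (f \<circ>\<^sub>m \<pi>\<^sub>1) = dom (g \<circ>\<^sub>m \<pi>\<^sub>2)"
    using pb_carrierD(3)[of _ A B C f g] by (auto simp: dom_def map_comp_def pb_p1_def pb_p2_def)
  show "(c1, c2) \<in> snd C" if "(f \<circ>\<^sub>m \<pi>\<^sub>1) d = Some c1" "(g \<circ>\<^sub>m \<pi>\<^sub>2) d = Some c2" for d c1 c2
    using that pb_carrierD(3)[of d A B C f g]
    by (auto simp: map_comp_def pb_p1_def pb_p2_def split: if_splits)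
qed

end

locale total_ef_cospan = ef_cospan +
  assumes total_f: "total_map A f" and total_g: "total_map B g"
begin

context
  fixes D' :: "'e ef" and p :: "'e \<Rightarrow> 'a option" and q :: "'e \<Rightarrow> 'b option"
  assumes ef_D': "is_ef D'" and map_p: "is_ef_map D' A p" and map_q: "is_ef_map D' B q"
    and cone: "map_equiv (snd C) (f \<circ>\<^sub>m p) (g \<circ>\<^sub>m q)"
begin

lemma cone_dom_eq: "dom p = dom q"
  using cone dom_map_comp_total[OF map_p total_f] dom_map_comp_total[OF map_q total_g]
  unfolding map_equiv_def by simp

lemma pair_map_in_pb_set:
  assumes "pair_map p q e = Some d"
  shows "d \<in> pb_set A B C f g"
proof -
  from assms have pq: "p e = Some (fst d)" "q e = Some (snd d)"
    by (simp_all add: pair_map_eq_Some_iff)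
  have ab: "fst d \<in> \<Union>(fst A)" "snd d \<in> \<Union>(fst B)"
    using ef_map_Some_in_carrier[OF map_p pq(1)] ef_map_Some_in_carrier[OF map_q pq(2)] .
  then have "fst d \<in> dom f" "snd d \<in> dom g"
    using total_f total_g unfolding total_map_def by simp_all
  then obtain c1 c2 where c: "f (fst d) = Some c1" "g (snd d) = Some c2"
    by blast
  with pq have "(f \<circ>\<^sub>m p) e = Some c1" "(g \<circ>\<^sub>m q) e = Some c2"
    by simp_all
  with cone have "(c1, c2) \<in> snd C"
    unfolding map_equiv_def by blast
  with ab c show ?thesis
    by (cases d) (simp add: pb_set_def)
qed

lemma pimage_pair_map_in_pb_configs:
  assumes x: "x \<in> fst D'"
  shows "pimage (pair_map p q) x \<in> pb_configs A B C f g"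
  unfolding mem_pb_configs_iff
proof (intro conjI ballI)
  show "pimage (pair_map p q) x \<subseteq> pb_set A B C f g"
    unfolding pimage_def by (auto intro: pair_map_in_pb_set)
  show "projects_into A B (pimage (pair_map p q) x)"
    using map_p map_q cone_dom_eq x by (rule projects_into_pimage_pair_map)
  fix d assume "d \<in> pimage (pair_map p q) x"
  then obtain e where e: "e \<in> x" "pair_map p q e = Some d"
    unfolding pimage_def by blast
  have "family_of_configs (fst D')"
    using ef_D' unfolding is_ef_def by blast
  then obtain es where es: "es \<noteq> []" "last es = e" "set es \<subseteq> x" "prefixes_satisfy (\<lambda>s. s \<in> fst D') es"
    using x e(1) by (rule family_of_configs_chain)
  show "\<exists>ds. ds \<noteq> [] \<and> last ds = d \<and> set ds \<subseteq> pimage (pair_map p q) x \<and>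
      prefixes_satisfy (projects_into A B) ds"
  proof (intro exI conjI)
    show "List.map_filter (pair_map p q) es \<noteq> []" "last (List.map_filter (pair_map p q) es) = d"
      using last_map_filter[of es "pair_map p q" d] es(1,2) e(2) by simp_all
    show "set (List.map_filter (pair_map p q) es) \<subseteq> pimage (pair_map p q) x"
      using es(3) by (auto simp: set_map_filter pimage_def)
    show "prefixes_satisfy (projects_into A B) (List.map_filter (pair_map p q) es)"
      using es(4) by (rule prefixes_satisfy_map_filter)
        (rule projects_into_pimage_pair_map[OF map_p map_q cone_dom_eq])
  qed
qed

lemma pair_map_in_pb_carrier:
  assumes "pair_map p q e = Some d"
  shows "d \<in> \<Union>(pb_configs A B C f g)"
proof -
  from assms have "e \<in> dom p"
    by (simp add: pair_map_eq_Some_iff domIff)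
  with map_p obtain x where x: "x \<in> fst D'" "e \<in> x"
    unfolding is_ef_map_def by blast
  with assms have "d \<in> pimage (pair_map p q) x"
    unfolding pimage_def by blast
  with pimage_pair_map_in_pb_configs[OF x(1)] show ?thesis
    by blast
qed

lemma pair_map_respects_equiv:
  assumes e: "(e1, e2) \<in> snd D'"
  shows "pair_map p q e1 = None \<and> pair_map p q e2 = None \<or>
      (\<exists>d1 d2. pair_map p q e1 = Some d1 \<and> pair_map p q e2 = Some d2 \<and> (d1, d2) \<in> pb_rel A B C f g)"
proof (cases "p e1")
  case None
  with ef_map_None_iff[OF map_p e] show ?thesis
    by (simp add: pair_map_eq_None_iff[OF cone_dom_eq])
next
  case (Some a1)
  then have "q e1 \<noteq> None"
    using dom_eq_None_iff[OF cone_dom_eq, of e1] by simp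
  then obtain b1 where b1: "q e1 = Some b1"
    by blast
  from Some have "p e2 \<noteq> None"
    using ef_map_None_iff[OF map_p e] by simp
  then obtain a2 where a2: "p e2 = Some a2"
    by blast
  from b1 have "q e2 \<noteq> None"
    using ef_map_None_iff[OF map_q e] by simp
  then obtain b2 where b2: "q e2 = Some b2"
    by blast
  have h: "pair_map p q e1 = Some (a1, b1)" "pair_map p q e2 = Some (a2, b2)"
    using Some b1 a2 b2 by (simp_all add: pair_map_eq_Some_iff)
  moreover have "(a1, a2) \<in> snd A" "(b1, b2) \<in> snd B"
    using ef_map_preserves_equiv[OF map_p e Some a2] ef_map_preserves_equiv[OF map_q e b1 b2] .
  ultimately have "((a1, b1), (a2, b2)) \<in> pb_rel A B C f g"
    using pair_map_in_pb_carrier[OF h(1)] pair_map_in_pb_carrier[OF h(2)] by (simp add: pb_rel_def)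
  with h show ?thesis
    by blast
qed

lemma pair_map_ef_map: "is_ef_map D' D (pair_map p q)"
  unfolding is_ef_map_def pb_ef_def fst_conv snd_conv
proof (intro conjI allI impI ballI)
  have "dom (pair_map p q) = dom p"
    using pair_map_eq_None_iff[OF cone_dom_eq] by (simp add: dom_def)
  with map_p show "dom (pair_map p q) \<subseteq> \<Union>(fst D')"
    unfolding is_ef_map_def by simp
  show "pair_map p q e1 = None \<and> pair_map p q e2 = None \<or>
      (\<exists>d1 d2. pair_map p q e1 = Some d1 \<and> pair_map p q e2 = Some d2 \<and> (d1, d2) \<in> pb_rel A B C f g)"
    if "(e1, e2) \<in> snd D'" for e1 e2
    using that by (rule pair_map_respects_equiv)
next
  fix x assume x: "x \<in> fst D'"
  then show "pimage (pair_map p q) x \<in> pb_configs A B C f g"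
    by (rule pimage_pair_map_in_pb_configs)
  fix e1 e2 d1 d2 assume e: "e1 \<in> x" "e2 \<in> x" "pair_map p q e1 = Some d1" "pair_map p q e2 = Some d2"
    and "(d1, d2) \<in> pb_rel A B C f g"
  then have "(fst d1, fst d2) \<in> snd A"
    unfolding pb_rel_def by simp
  moreover have "p e1 = Some (fst d1)" "p e2 = Some (fst d2)"
    using e(3,4) by (simp_all add: pair_map_eq_Some_iff)
  ultimately show "(e1, e2) \<in> snd D'"
    using ef_map_reflects_equiv[OF map_p x e(1,2)] by blast
qed

lemma pb_universal: "\<exists>!h. is_ef_map D' D h \<and> p = \<pi>\<^sub>1 \<circ>\<^sub>m h \<and> q = \<pi>\<^sub>2 \<circ>\<^sub>m h"
proof (rule ex1I)
  show "is_ef_map D' D (pair_map p q) \<and> p = \<pi>\<^sub>1 \<circ>\<^sub>m pair_map p q \<and> q = \<pi>\<^sub>2 \<circ>\<^sub>m pair_map p q"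
    using pair_map_ef_map pb_p1_comp[OF pair_map_ef_map] pb_p2_comp[OF pair_map_ef_map]
      map_option_fst_pair_map[OF cone_dom_eq] map_option_snd_pair_map[OF cone_dom_eq]
    by simp
  fix h assume h: "is_ef_map D' D h \<and> p = \<pi>\<^sub>1 \<circ>\<^sub>m h \<and> q = \<pi>\<^sub>2 \<circ>\<^sub>m h"
  then have "p = map_option fst \<circ> h" "q = map_option snd \<circ> h"
    using pb_p1_comp[of D' A B C f g h] pb_p2_comp[of D' A B C f g h] by simp_all
  then show "h = pair_map p q"
    by (simp add: pair_map_map_option_fst_snd)
qed

end

lemma pb_is_pseudo_pullback: "is_pseudo_pullback TYPE('d) A B C f g D \<pi>\<^sub>1 \<pi>\<^sub>2"
  unfolding is_pseudo_pullback_def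
  using is_ef_pb pb_p1_ef_map pb_p2_ef_map pb_square_map_equiv pb_universal by blast

lemma pb_is_pullback:
  assumes "snd C = Id_on (\<Union>(fst C))"
  shows "is_pullback TYPE('d) A B C f g D \<pi>\<^sub>1 \<pi>\<^sub>2"
proof -
  have map_equiv_iff_eq: "map_equiv (snd C) (f \<circ>\<^sub>m p) (g \<circ>\<^sub>m q) \<longleftrightarrow> f \<circ>\<^sub>m p = g \<circ>\<^sub>m q"
    for p :: "'e \<Rightarrow> 'a option" and q :: "'e \<Rightarrow> 'b option"
    unfolding assms by (rule map_equiv_Id_on_iff[OF ran_map_comp_ef_map[OF map_f]])
  show ?thesis
    unfolding is_pullback_def map_equiv_iff_eq[symmetric]
    using is_ef_pb pb_p1_ef_map pb_p2_ef_map pb_square_map_equiv pb_universal by blast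
qed

end

theorem mainTheorem9:
  fixes A :: "'a ef" and B :: "'b ef" and C :: "'c ef"
    and f :: "'a \<Rightarrow> 'c option" and g :: "'b \<Rightarrow> 'c option"
  assumes "is_ef A" and "is_ef B" and "is_ef C"
    and "is_ef_map A C f" and "is_ef_map B C g"
    and "total_map A f" and "total_map B g"
  shows "is_pseudo_pullback TYPE('d) A B C f g (pb_ef A B C f g) (pb_p1 A B C f g) (pb_p2 A B C f g)
       \<and> (snd C = Id_on (\<Union>(fst C)) \<longrightarrow>
          is_pullback TYPE('d) A B C f g (pb_ef A B C f g) (pb_p1 A B C f g) (pb_p2 A B C f g))"
proof -
  interpret total_ef_cospan A B C f g
    using assms by unfold_locales
  show ?thesis
    using pb_is_pseudo_pullback pb_is_pullback by blast
qed

end
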